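(* Let $\rho$ be a probability density on $\mathbb{R}$ supported on $[\alpha,\beta]$ with $0\le\alpha<\beta<\infty$, continuous and bounded on $[\alpha,\beta]$. Fix $\lambda\in(\alpha,\beta)$ with $\rho(\lambda)>0$ and assume $\rho$ is continuously differentiable on a neighborhood of $\lambda$. For each $p$ in an unbounded sequence of positive integers, let $0<\lambda^{(p)}_1<\lambda^{(p)}_2<\cdots<\lambda^{(p)}_p$ be simple eigenvalues, and let $i=i(p)$ be an index with $2\le i\le p-1$ and $\lambda^{(p)}_{i}=\lambda$. Write $s_i^{-}=\lambda_i^{(p)}-\lambda^{(p)}_{i-1}$, $s_i^{+}=\lambda^{(p)}_{i+1}-\lambda_i^{(p)}$, and $f_\lambda(x)=\lambda x/(\lambda-x)^2$. Assume: (i) there are constants $0<a<b$ such that $a\le p\,s_i^{\pm}\le b$ for all $p$; (ii) $\frac1p\sum_{j=1}^{i-2} f_\lambda(\lambda^{(p)}_j)-\int_\alpha^{\lambda-s_i^-}f_\lambda(x)\rho(x)\,dx=o(p)$ and $\frac1p\sum_{j=i+2}^{p} f_\lambda(\lambda^{(p)}_j)-\int_{\lambda+s_i^+}^{\beta}f_\lambda(x)\rho(x)\,dx=o(p)$ as $p\to\infty$. Let $h_i=\sum_{j\ne i}\frac{\lambda_i\lambda_j}{(\lambda_i-\lambda_j)^2}$ and $$\hat h_i=\lambda^2\left[\frac{1}{(s_i^-)^2}+\frac{1}{(s_i^+)^2}+p\rho(\lambda)\left(\frac1{s_i^-}+\frac1{s_i^+}\right)\right].$$ Then $h_i-\hat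 h_i=o(p^2)$ while $\hat h_i$ is of exact order $p^2$; in particular $h_i/\hat h_i\to1$ as $p\to\infty$.
   Context: This is the paper's large-$p$ approximation of the quantity $h_i$ appearing in the asymptotic expected eigenvector error $\mathbb{E}[n\|\bm u_i-\tilde{\bm u}_i\|^2]\to h_i$ for Wishart sample covariance matrices. Hypothesis (i) encodes that nearest-neighbour eigenvalue gaps are of order $1/(p\rho(\lambda))$; hypothesis (ii) encodes that the empirical spectral density converges to $\rho$ fast enough near $\lambda$. *)

theory Defs
  imports "HOL-Analysis.Analysis" "HOL-Library.Landau_Symbols"
begin

definition flam :: "real \<Rightarrow> real \<Rightarrow> real" where
  "flam l x = l * x / (l - x)^2"

end

theory Submission
  imports Defs
begin

(*
  Split h into the two nearest neighbours of l, which contribute l^2/s^2 -+ l/s exactly, and the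
  two far sums. By (ii) each far sum is p times the integral of flam l * rho truncated at distance
  s from l, up to o(p^2). Writing flam l x * rho x = g x / (l - x)^2 with g x = l x rho(x),
  continuity of g at l gives  (truncated integral) = g(l)/s + o(1/s)  as s -> 0+, and
  g(l) = l^2 rho(l). Since the gaps s are of exact order 1/p, every error term is o(p^2)
  (l/s = O(p) included), while every term of hhat is of order p^2.
*)

lemma has_integral_inverse_square:
  fixes c L s t :: real
  assumes "0 < s" "s \<le> t"
  shows "((\<lambda>x. c / (L - x)^2) has_integral (c / s - c / t)) {L - t..L - s}"
proof -
  have "((\<lambda>x. c / (L - x)^2) has_integral (c / (L - (L - s)) - c / (L - (L - t)))) {L - t..L - s}"
  proof (rule fundamental_theorem_of_calculus)
    fix x assume "x \<in> {L - t..L - s}"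
    then have "L - x \<noteq> 0" using assms by auto
    then show "((\<lambda>x. c / (L - x)) has_vector_derivative c / (L - x)^2) (at x within {L - t..L - s})"
      by (auto intro!: derivative_eq_intros
          simp: has_real_derivative_iff_has_vector_derivative[symmetric] power2_eq_square field_simps)
  qed (use assms in simp)
  then show ?thesis by simp
qed

lemma integral_double_pole_deviation:
  fixes g :: "real \<Rightarrow> real"
  assumes "0 < s" "s \<le> t" and g: "continuous_on {L - t..L - s} g"
    and close: "\<And>x. x \<in> {L - t..L - s} \<Longrightarrow> \<bar>g x - c\<bar> \<le> e"
  shows "\<bar>integral {L - t..L - s} (\<lambda>x. g x / (L - x)^2) - (c / s - c / t)\<bar> \<le> e / s - e / t"
proof -
  note pole = has_integral_inverse_square[OF assms(1,2), of _ L]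
  have "continuous_on {L - t..L - s} (\<lambda>x. (g x - c) / (L - x)^2)"
    using \<open>0 < s\<close> by (intro continuous_intros g) auto
  then have int: "(\<lambda>x. (g x - c) / (L - x)^2) integrable_on {L - t..L - s}"
    by (rule integrable_continuous_interval)
  have "(\<lambda>x. g x / (L - x)^2) = (\<lambda>x. (g x - c) / (L - x)^2 + c / (L - x)^2)"
    by (simp add: fun_eq_iff diff_divide_distrib)
  then have "integral {L - t..L - s} (\<lambda>x. g x / (L - x)^2) - (c / s - c / t)
      = integral {L - t..L - s} (\<lambda>x. (g x - c) / (L - x)^2)"
    using integral_add[OF int has_integral_integrable[OF pole[of c]]] integral_unique[OF pole[of c]]
    by simp
  also have "\<bar>\<dots>\<bar> \<le> integral {L - t..L - s} (\<lambda>x. e / (L - x)^2)"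
  proof (rule integral_norm_bound_integral[OF int has_integral_integrable[OF pole[of e]],
        unfolded real_norm_def])
    fix x assume x: "x \<in> {L - t..L - s}"
    then have "0 < (L - x)^2" using \<open>0 < s\<close> by auto
    with close[OF x] show "\<bar>(g x - c) / (L - x)^2\<bar> \<le> e / (L - x)^2"
      by (simp add: abs_div divide_right_mono)
  qed
  also have "\<dots> = e / s - e / t" by (rule integral_unique[OF pole[of e]])
  finally show ?thesis .
qed

lemma integral_below_double_pole:
  fixes g :: "real \<Rightarrow> real"
  assumes "A < L" and g: "continuous_on {A..L} g"
  shows "(\<lambda>s. integral {A..L - s} (\<lambda>x. g x / (L - x)^2) - g L / s) \<in> o[at_right 0](\<lambda>s. 1 / s)"
proof (rule landau_o.smallI)
  fix c :: real assume "c > 0"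
  define e where "e = c / 2"
  have "e > 0" using \<open>c > 0\<close> by (simp add: e_def)
  obtain d where "d > 0" and d: "\<And>x. x \<in> {A..L} \<Longrightarrow> dist x L < d \<Longrightarrow> dist (g x) (g L) < e"
    using g \<open>e > 0\<close> \<open>A < L\<close> unfolding continuous_on_iff
    by (metis atLeastAtMost_iff less_eq_real_def order_refl)
  define t where "t = min (d / 2) (L - A)"
  have "t > 0" using \<open>d > 0\<close> \<open>A < L\<close> by (simp add: t_def)
  define f where "f x = g x / (L - x)^2" for x
  define K where "K = \<bar>integral {A..L - t} f\<bar> + \<bar>g L\<bar> / t"
  have "K \<ge> 0" using \<open>t > 0\<close> by (simp add: K_def)
  have bound: "\<bar>integral {A..L - s} f - g L / s\<bar> \<le> e / s + K" if s: "0 < s" "s < t" for s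
  proof -
    have "continuous_on {A..L - s} f"
      using s unfolding f_def by (intro continuous_intros continuous_on_subset[OF g]) auto
    then have "integral {A..L - s} f = integral {A..L - t} f + integral {L - t..L - s} f"
      using s \<open>t > 0\<close>
      by (intro Henstock_Kurzweil_Integration.integral_combine[symmetric]
          integrable_continuous_interval) (auto simp: t_def)
    moreover have "\<bar>integral {L - t..L - s} f - (g L / s - g L / t)\<bar> \<le> e / s - e / t"
      unfolding f_def
    proof (rule integral_double_pole_deviation)
      show "continuous_on {L - t..L - s} g"
        using s by (intro continuous_on_subset[OF g]) (auto simp: t_def)
      fix x assume "x \<in> {L - t..L - s}"
      then have "x \<in> {A..L}" "dist x L < d" using s by (auto simp: t_def dist_real_def)
      then show "\<bar>g x - g L\<bar> \<le> e" using d by (simp add: dist_real_def less_imp_le)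
    qed (use s in auto)
    moreover have "\<bar>g L / t\<bar> = \<bar>g L\<bar> / t" "e / t > 0" using \<open>t > 0\<close> \<open>e > 0\<close> by simp_all
    ultimately show ?thesis unfolding K_def by linarith
  qed
  have "eventually (\<lambda>s. s \<in> {0<..<min t (e / (K + 1))}) (at_right 0)"
    using \<open>t > 0\<close> \<open>e > 0\<close> \<open>K \<ge> 0\<close> by (intro eventually_at_right_real) simp
  then show "eventually (\<lambda>s. norm (integral {A..L - s} (\<lambda>x. g x / (L - x)^2) - g L / s)
      \<le> c * norm (1 / s)) (at_right 0)"
  proof eventually_elim
    case (elim s)
    then have "s > 0" "s < t" "K \<le> e / s"
      using \<open>K \<ge> 0\<close> by (auto simp: field_simps)
    with bound[of s] show ?case by (simp add: e_def f_def[abs_def])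
  qed
qed

lemma integral_reflect_double_pole:
  fixes g :: "real \<Rightarrow> real"
  shows "integral {L + s..B} (\<lambda>x. g x / (x - L)^2)
    = integral {-B..-L - s} (\<lambda>x. g (-x) / (-L - x)^2)"
  using Henstock_Kurzweil_Integration.integral_reflect_real[of B "L + s" "\<lambda>x. g x / (x - L)^2"]
  by (simp add: power2_commute add.commute)

lemma reciprocal_gap_bounds:
  fixes a b P s :: real
  assumes "0 < a" "0 < P" "a \<le> P * s" "P * s \<le> b"
  shows "0 < s" "P / b \<le> 1 / s" "1 / s \<le> P / a"
proof -
  show "0 < s" using assms by (smt (verit) zero_less_mult_iff)
  with assms show "P / b \<le> 1 / s" "1 / s \<le> P / a" by (simp_all add: field_simps)
qed

lemma gap_tendsto_zero:
  fixes P s :: "nat \<Rightarrow> real"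
  assumes P: "filterlim P at_top sequentially"
    and s: "\<And>n. 0 < s n" "\<And>n. 0 < P n" "\<And>n. P n * s n \<le> b"
  shows "filterlim s (at_right 0) sequentially"
proof (rule tendsto_imp_filterlim_at_right)
  have "\<forall>n. 0 \<le> s n" "\<forall>n. s n \<le> b / P n"
    using s by (auto simp: pos_le_divide_eq mult.commute less_imp_le)
  moreover have "(\<lambda>n. b / P n) \<longlonglongrightarrow> 0"
    by (rule tendsto_divide_0[OF tendsto_const filterlim_at_top_imp_at_infinity[OF P]])
  ultimately show "s \<longlonglongrightarrow> 0"
    by (rule tendsto_sandwich[OF always_eventually always_eventually tendsto_const])
  show "eventually (\<lambda>n. 0 < s n) sequentially" using s(1) by simp
qed

lemma reciprocal_gap_bigo:
  fixes P s :: "nat \<Rightarrow> real"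
  assumes "0 < a" "\<And>n. 0 < P n" "\<And>n. a \<le> P n * s n"
  shows "(\<lambda>n. 1 / s n) \<in> O(P)"
proof (rule landau_o.bigI[of "1 / a"])
  show "eventually (\<lambda>n. norm (1 / s n) \<le> 1 / a * norm (P n)) sequentially"
  proof (rule always_eventually, intro allI)
    fix n
    have "0 < s n" "1 / s n \<le> P n / a"
      using reciprocal_gap_bounds[OF \<open>0 < a\<close> assms(2,3) order_refl] by simp_all
    with assms(2)[of n] show "norm (1 / s n) \<le> 1 / a * norm (P n)" by simp
  qed
qed (use \<open>0 < a\<close> in simp)

lemma self_smallo_square:
  fixes P :: "'a \<Rightarrow> real"
  assumes "filterlim P at_top F"
  shows "P \<in> o[F](\<lambda>x. P x ^ 2)"
proof (rule landau_o.smallI)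
  fix c :: real assume "c > 0"
  from assms have "eventually (\<lambda>x. 1 / c \<le> P x) F" by (simp add: filterlim_at_top)
  then show "eventually (\<lambda>x. norm (P x) \<le> c * norm (P x ^ 2)) F"
  proof eventually_elim
    case (elim x)
    with \<open>c > 0\<close> have "0 \<le> P x" "1 \<le> c * P x"
      by (auto simp: field_simps intro: order_trans[rotated, OF elim] less_imp_le)
    then show ?case
      using mult_right_mono[OF \<open>1 \<le> c * P x\<close> \<open>0 \<le> P x\<close>] by (simp add: power2_eq_square mult_ac)
  qed
qed

lemma reciprocal_gap_smallo_square:
  fixes P s :: "nat \<Rightarrow> real"
  assumes "0 < a" "\<And>n. 0 < P n" "\<And>n. a \<le> P n * s n" "filterlim P at_top sequentially"
  shows "(\<lambda>n. c / s n) \<in> o(\<lambda>n. P n ^ 2)"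
proof (cases "c = 0")
  case False
  have "(\<lambda>n. 1 / s n) \<in> o(\<lambda>n. P n ^ 2)"
    by (rule landau_o.big_small_trans[OF reciprocal_gap_bigo[OF assms(1-3)]
          self_smallo_square[OF assms(4)]])
  then have "(\<lambda>n. c * (1 / s n)) \<in> o(\<lambda>n. P n ^ 2)"
    using False by (rule landau_o.small.cmult_in_iff[THEN iffD2, rotated])
  then show ?thesis by simp
qed simp

lemma riemann_sum_minus_pole_smallo:
  fixes S I s P :: "nat \<Rightarrow> real"
  assumes sum: "(\<lambda>n. 1 / P n * S n - I n) \<in> o(P)"
    and pole: "(\<lambda>n. I n - c / s n) \<in> o(\<lambda>n. 1 / s n)"
    and gap: "(\<lambda>n. 1 / s n) \<in> O(P)"
    and "\<And>n. P n \<noteq> 0"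
  shows "(\<lambda>n. S n - P n * c / s n) \<in> o(\<lambda>n. P n ^ 2)"
proof -
  have "(\<lambda>n. P n * (1 / P n * S n - I n)) \<in> o(\<lambda>n. P n * P n)"
    by (rule landau_o.big_small_mult[OF landau_o.big_refl sum])
  moreover have "(\<lambda>n. P n * (I n - c / s n)) \<in> o(\<lambda>n. P n * P n)"
    by (rule landau_o.big_small_mult[OF landau_o.big_refl landau_o.small_big_trans[OF pole gap]])
  ultimately have "(\<lambda>n. P n * (1 / P n * S n - I n) + P n * (I n - c / s n)) \<in> o(\<lambda>n. P n ^ 2)"
    by (simp add: sum_in_smallo power2_eq_square)
  also have "(\<lambda>n. P n * (1 / P n * S n - I n) + P n * (I n - c / s n)) = (\<lambda>n. S n - P n * c / s n)"
    using \<open>\<And>n. P n \<noteq> 0\<close> by (simp add: algebra_simps)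
  finally show ?thesis .
qed

lemma riemann_sum_below_pole:
  fixes g :: "real \<Rightarrow> real" and S P s :: "nat \<Rightarrow> real"
  assumes "A < L" "continuous_on {A..L} g" "filterlim P at_top sequentially" "0 < a"
    and gap: "\<And>n. 0 < P n" "\<And>n. a \<le> P n * s n \<and> P n * s n \<le> b"
    and sum: "(\<lambda>n. 1 / P n * S n - integral {A..L - s n} (\<lambda>x. g x / (L - x)^2)) \<in> o(P)"
  shows "(\<lambda>n. S n - P n * g L / s n) \<in> o(\<lambda>n. P n ^ 2)"
proof (rule riemann_sum_minus_pole_smallo[OF sum])
  have "filterlim s (at_right 0) sequentially"
    using gap_tendsto_zero[OF assms(3) _ gap(1)] reciprocal_gap_bounds(1)[OF \<open>0 < a\<close>] gap by blast
  then show "(\<lambda>n. integral {A..L - s n} (\<lambda>x. g x / (L - x)^2) - g L / s n) \<in> o(\<lambda>n. 1 / s n)"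
    by (rule landau_o.small.compose[OF integral_below_double_pole[OF assms(1,2)]])
  show "(\<lambda>n. 1 / s n) \<in> O(P)" using reciprocal_gap_bigo[OF \<open>0 < a\<close>] gap by blast
qed (use gap in \<open>simp add: less_imp_neq[symmetric]\<close>)

lemma riemann_sum_above_pole:
  fixes g :: "real \<Rightarrow> real" and S P s :: "nat \<Rightarrow> real"
  assumes "L < B" "continuous_on {L..B} g" "filterlim P at_top sequentially" "0 < a"
    and gap: "\<And>n. 0 < P n" "\<And>n. a \<le> P n * s n \<and> P n * s n \<le> b"
    and sum: "(\<lambda>n. 1 / P n * S n - integral {L + s n..B} (\<lambda>x. g x / (x - L)^2)) \<in> o(P)"
  shows "(\<lambda>n. S n - P n * g L / s n) \<in> o(\<lambda>n. P n ^ 2)"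
proof -
  have "continuous_on {-B..-L} (\<lambda>x. g (-x))"
    by (rule continuous_on_compose2[OF assms(2) continuous_on_minus[OF continuous_on_id]]) auto
  from riemann_sum_below_pole[OF _ this assms(3,4) gap, of S] sum \<open>L < B\<close> show ?thesis
    by (simp add: integral_reflect_double_pole)
qed

lemma gap_weights_bounds:
  fixes a b r P u v :: real
  assumes "0 < a" "0 < r" "0 < P"
    and "a \<le> P * u" "P * u \<le> b" "a \<le> P * v" "P * v \<le> b"
  shows "2 * r / b * P^2 \<le> 1 / u^2 + 1 / v^2 + P * r * (1 / u + 1 / v)"
    and "1 / u^2 + 1 / v^2 + P * r * (1 / u + 1 / v) \<le> (2 / a^2 + 2 * r / a) * P^2"
proof -
  note u = reciprocal_gap_bounds[OF \<open>0 < a\<close> \<open>0 < P\<close> assms(4,5)]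
  note v = reciprocal_gap_bounds[OF \<open>0 < a\<close> \<open>0 < P\<close> assms(6,7)]
  have "P * r * (2 * P / b) \<le> P * r * (1 / u + 1 / v)"
    using u v assms(2,3) by (intro mult_left_mono) auto
  moreover have "2 * r / b * P^2 = P * r * (2 * P / b)" by (simp add: power2_eq_square)
  moreover have "0 \<le> 1 / u^2" "0 \<le> 1 / v^2" by simp_all
  ultimately show "2 * r / b * P^2 \<le> 1 / u^2 + 1 / v^2 + P * r * (1 / u + 1 / v)" by linarith
  have "(1 / u)^2 \<le> (P / a)^2" "(1 / v)^2 \<le> (P / a)^2"
    using u v by (simp_all add: power_mono)
  moreover have "P * r * (1 / u + 1 / v) \<le> P * r * (2 * P / a)"
    using u v assms(2,3) by (intro mult_left_mono) auto
  moreover have "(2 / a^2 + 2 * r / a) * P^2 = (P / a)^2 + (P / a)^2 + P * r * (2 * P / a)"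
    by (simp add: power2_eq_square field_simps)
  ultimately show "1 / u^2 + 1 / v^2 + P * r * (1 / u + 1 / v) \<le> (2 / a^2 + 2 * r / a) * P^2"
    by (simp add: power_one_over)
qed

lemma gap_weights_bigtheta:
  fixes P sm sp :: "nat \<Rightarrow> real"
  assumes "0 < a" "0 < K" "0 < r" "\<And>n. 0 < P n"
    and sm: "\<And>n. a \<le> P n * sm n \<and> P n * sm n \<le> b"
    and sp: "\<And>n. a \<le> P n * sp n \<and> P n * sp n \<le> b"
  shows "(\<lambda>n. K * (1 / sm n ^ 2 + 1 / sp n ^ 2 + P n * r * (1 / sm n + 1 / sp n)))
      \<in> \<Theta>(\<lambda>n. P n ^ 2)"
proof (rule bigthetaI'[of "K * (2 * r / b)" "K * (2 / a^2 + 2 * r / a)"])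
  have "0 < b" using sm[of 0] assms(1) assms(4)[of 0] by (smt (verit) zero_less_mult_iff)
  then show "0 < K * (2 * r / b)" "0 < K * (2 / a^2 + 2 * r / a)"
    using assms(1-3) by (simp_all add: add_pos_pos)
  show "eventually (\<lambda>n. K * (2 * r / b) * norm (P n ^ 2)
      \<le> norm (K * (1 / sm n ^ 2 + 1 / sp n ^ 2 + P n * r * (1 / sm n + 1 / sp n)))
    \<and> norm (K * (1 / sm n ^ 2 + 1 / sp n ^ 2 + P n * r * (1 / sm n + 1 / sp n)))
      \<le> K * (2 / a^2 + 2 * r / a) * norm (P n ^ 2)) sequentially"
  proof (rule always_eventually, intro allI)
    fix n
    define W where "W = 1 / sm n ^ 2 + 1 / sp n ^ 2 + P n * r * (1 / sm n + 1 / sp n)"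
    note bounds = gap_weights_bounds[OF assms(1,3,4) conjunct1[OF sm] conjunct2[OF sm]
        conjunct1[OF sp] conjunct2[OF sp], of n, folded W_def]
    have "0 \<le> 2 * r / b * P n ^ 2" using \<open>0 < b\<close> \<open>0 < r\<close> by simp
    with bounds have "0 \<le> W" by linarith
    with mult_left_mono[OF bounds(1), of K] mult_left_mono[OF bounds(2), of K] \<open>0 < K\<close>
    show "K * (2 * r / b) * norm (P n ^ 2) \<le> norm (K * W)
      \<and> norm (K * W) \<le> K * (2 / a^2 + 2 * r / a) * norm (P n ^ 2)"
      by (simp add: abs_mult mult_ac)
  qed
qed

lemma ratio_tendsto_one_of_smallo:
  fixes f g h :: "'a \<Rightarrow> real"
  assumes "(\<lambda>x. f x - g x) \<in> o[F](h)" "g \<in> \<Theta>[F](h)" "\<And>x. g x \<noteq> 0"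
  shows "((\<lambda>x. f x / g x) \<longlongrightarrow> 1) F"
proof -
  have "(\<lambda>x. f x - g x) \<in> o[F](g)"
    using landau_o.small_big_trans[OF assms(1)
        bigthetaD1[OF assms(2)[THEN bigtheta_sym[THEN iffD1]]]] .
  then show ?thesis
    using assms(3) by (intro asymp_equivD_strong[OF smallo_imp_asymp_equiv] always_eventually) auto
qed

lemma eigen_sum_decomposition:
  fixes lam :: "nat \<Rightarrow> real"
  assumes "2 \<le> k" "k < q" "lam (k - 1) = l - sm" "lam (k + 1) = l + sp" "sm \<noteq> 0" "sp \<noteq> 0"
  shows "(\<Sum>j\<in>{1..q} - {k}. l * lam j / (l - lam j)^2)
        - l^2 * (1 / sm^2 + 1 / sp^2 + P * r * (1 / sm + 1 / sp))
      = ((\<Sum>j = 1..k - 2. flam l (lam j)) - P * (l * l * r) / sm)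
        + ((\<Sum>j = k + 2..q. flam l (lam j)) - P * (l * l * r) / sp) + (l / sp - l / sm)"
proof -
  have parts: "{1..q} - {k} = ({1..k - 2} \<union> {k + 2..q}) \<union> {k - 1, k + 1}"
    using assms(1,2) by auto
  have "(\<Sum>j\<in>{1..q} - {k}. l * lam j / (l - lam j)^2) = (\<Sum>j\<in>{1..q} - {k}. flam l (lam j))"
    by (simp add: flam_def)
  also have "\<dots> = (\<Sum>j\<in>{1..k - 2} \<union> {k + 2..q}. flam l (lam j)) + (\<Sum>j\<in>{k - 1, k + 1}. flam l (lam j))"
    unfolding parts by (rule sum.union_disjoint) auto
  also have "(\<Sum>j\<in>{1..k - 2} \<union> {k + 2..q}. flam l (lam j))
      = (\<Sum>j = 1..k - 2. flam l (lam j)) + (\<Sum>j = k + 2..q. flam l (lam j))"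
    by (rule sum.union_disjoint) auto
  also have "(\<Sum>j\<in>{k - 1, k + 1}. flam l (lam j)) = flam l (lam (k - 1)) + flam l (lam (k + 1))"
    using assms(1) by simp
  finally have "(\<Sum>j\<in>{1..q} - {k}. l * lam j / (l - lam j)^2)
      = (\<Sum>j = 1..k - 2. flam l (lam j)) + (\<Sum>j = k + 2..q. flam l (lam j))
        + (flam l (lam (k - 1)) + flam l (lam (k + 1)))" .
  moreover have "flam l (lam (k - 1)) = l^2 / sm^2 - l / sm"
    "flam l (lam (k + 1)) = l^2 / sp^2 + l / sp"
    unfolding assms(3,4) flam_def using assms(5,6) by (simp_all add: power2_eq_square field_simps)
  ultimately show ?thesis by (simp add: distrib_left power2_eq_square mult_ac)
qed

theorem mainTheorem1:
  fixes \<rho> :: "real \<Rightarrow> real" and \<alpha> \<beta> l :: real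
    and p :: "nat \<Rightarrow> nat" and lam :: "nat \<Rightarrow> nat \<Rightarrow> real" and i :: "nat \<Rightarrow> nat"
  assumes ab: "0 \<le> \<alpha>" "\<alpha> < \<beta>"
    and dens_nonneg: "\<And>x. \<rho> x \<ge> 0"
    and dens_supp: "\<And>x. x \<notin> {\<alpha>..\<beta>} \<Longrightarrow> \<rho> x = 0"
    and dens_int: "(\<rho> has_integral 1) UNIV"
    and dens_cont: "continuous_on {\<alpha>..\<beta>} \<rho>"
    and dens_bdd: "bounded (\<rho> ` {\<alpha>..\<beta>})"
    and l_in: "l \<in> {\<alpha><..<\<beta>}" and rho_pos: "\<rho> l > 0"
    and C1: "\<exists>e>0. \<rho> C1_differentiable_on ball l e"
    and p_pos: "\<And>n. p n > 0"
    and p_unbdd: "filterlim p at_top sequentially"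
    and eig_pos: "\<And>n. 0 < lam n 1"
    and eig_incr: "\<And>n j. 1 \<le> j \<Longrightarrow> j < p n \<Longrightarrow> lam n j < lam n (Suc j)"
    and i_range: "\<And>n. 2 \<le> i n \<and> i n \<le> p n - 1"
    and i_eig: "\<And>n. lam n (i n) = l"
    and gaps: "\<exists>a b. 0 < a \<and> a < b \<and>
       (\<forall>n. a \<le> real (p n) * (lam n (i n) - lam n (i n - 1)) \<and>
             real (p n) * (lam n (i n) - lam n (i n - 1)) \<le> b \<and>
             a \<le> real (p n) * (lam n (i n + 1) - lam n (i n)) \<and>
             real (p n) * (lam n (i n + 1) - lam n (i n)) \<le> b)"
    and esd_left: "(\<lambda>n. (1 / real (p n)) * (\<Sum>j = 1..i n - 2. flam l (lam n j))
        - integral {\<alpha>..l - (lam n (i n) - lam n (i n - 1))} (\<lambda>x. flam l x * \<rho> x))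
        \<in> o[sequentially](\<lambda>n. real (p n))"
    and esd_right: "(\<lambda>n. (1 / real (p n)) * (\<Sum>j = i n + 2..p n. flam l (lam n j))
        - integral {l + (lam n (i n + 1) - lam n (i n))..\<beta>} (\<lambda>x. flam l x * \<rho> x))
        \<in> o[sequentially](\<lambda>n. real (p n))"
  defines "h \<equiv> \<lambda>n. \<Sum>j \<in> {1..p n} - {i n}.
              lam n (i n) * lam n j / (lam n (i n) - lam n j)^2"
    and "hhat \<equiv> \<lambda>n. l^2 * (1 / (lam n (i n) - lam n (i n - 1))^2
              + 1 / (lam n (i n + 1) - lam n (i n))^2
              + real (p n) * \<rho> l * (1 / (lam n (i n) - lam n (i n - 1))
                                     + 1 / (lam n (i n + 1) - lam n (i n))))"
  shows "(\<lambda>n. h n - hhat n) \<in> o[sequentially](\<lambda>n. real (p n)^2)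
       \<and> hhat \<in> \<Theta>[sequentially](\<lambda>n. real (p n)^2)
       \<and> (\<lambda>n. h n / hhat n) \<longlonglongrightarrow> 1"
proof -
  define P where "P n = real (p n)" for n
  define sm where "sm n = lam n (i n) - lam n (i n - 1)" for n
  define sp where "sp n = lam n (i n + 1) - lam n (i n)" for n
  define g where "g x = l * x * \<rho> x" for x
  obtain a b where "0 < a" and gap_m: "\<And>n. a \<le> P n * sm n \<and> P n * sm n \<le> b"
    and gap_p: "\<And>n. a \<le> P n * sp n \<and> P n * sp n \<le> b"
    using gaps unfolding P_def sm_def sp_def by blast
  have P: "\<And>n. 0 < P n" "filterlim P at_top sequentially"
    using p_pos filterlim_compose[OF filterlim_real_sequentially p_unbdd]
    by (simp_all add: P_def[abs_def] o_def)
  have s_pos: "0 < sm n" "0 < sp n" for n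
    using reciprocal_gap_bounds(1)[OF \<open>0 < a\<close> P(1)] gap_m gap_p by blast+
  have "\<alpha> < l" "l < \<beta>" "0 < l" using l_in ab by auto
  have g: "continuous_on {\<alpha>..l} g" "continuous_on {l..\<beta>} g"
    using \<open>\<alpha> < l\<close> \<open>l < \<beta>\<close> unfolding g_def
    by (auto intro!: continuous_intros intro: continuous_on_subset[OF dens_cont])
  have integrand: "(\<lambda>x. flam l x * \<rho> x) = (\<lambda>x. g x / (l - x)^2)"
    "(\<lambda>x. flam l x * \<rho> x) = (\<lambda>x. g x / (x - l)^2)"
    by (simp_all add: fun_eq_iff flam_def g_def power2_commute)
  have left: "(\<lambda>n. (\<Sum>j = 1..i n - 2. flam l (lam n j)) - P n * g l / sm n) \<in> o(\<lambda>n. P n ^ 2)"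
    by (rule riemann_sum_below_pole[OF \<open>\<alpha> < l\<close> g(1) P(2) \<open>0 < a\<close> P(1) gap_m
          esd_left[folded P_def sm_def, unfolded integrand(1) i_eig]])
  have right: "(\<lambda>n. (\<Sum>j = i n + 2..p n. flam l (lam n j)) - P n * g l / sp n) \<in> o(\<lambda>n. P n ^ 2)"
    by (rule riemann_sum_above_pole[OF \<open>l < \<beta>\<close> g(2) P(2) \<open>0 < a\<close> P(1) gap_p
          esd_right[folded P_def sp_def, unfolded integrand(2) i_eig]])
  have near: "(\<lambda>n. l / sp n - l / sm n) \<in> o(\<lambda>n. P n ^ 2)"
    using gap_m gap_p
    by (intro sum_in_smallo reciprocal_gap_smallo_square[OF \<open>0 < a\<close> P(1) _ P(2)]) auto
  have decomp: "h n - hhat n = ((\<Sum>j = 1..i n - 2. flam l (lam n j)) - P n * g l / sm n)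
      + ((\<Sum>j = i n + 2..p n. flam l (lam n j)) - P n * g l / sp n) + (l / sp n - l / sm n)" for n
    unfolding h_def hhat_def[folded sm_def sp_def P_def] i_eig g_def
    using i_eig[of n] i_range[of n] p_pos[of n] s_pos[of n]
    by (intro eigen_sum_decomposition) (auto simp: sm_def sp_def simp del: One_nat_def)
  have small: "(\<lambda>n. h n - hhat n) \<in> o(\<lambda>n. P n ^ 2)"
    unfolding decomp by (intro sum_in_smallo(1) left right near)
  have big: "hhat \<in> \<Theta>(\<lambda>n. P n ^ 2)"
    unfolding hhat_def[folded sm_def sp_def P_def] using \<open>0 < l\<close>
    by (intro gap_weights_bigtheta[OF \<open>0 < a\<close> _ rho_pos P(1) gap_m gap_p]) simp
  have "hhat n \<noteq> 0" for n
    unfolding hhat_def[folded sm_def sp_def P_def] using \<open>0 < l\<close> rho_pos P(1)[of n] s_pos[of n]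
    by (intro mult_pos_pos add_pos_pos less_imp_neq[symmetric]) auto
  then have "(\<lambda>n. h n / hhat n) \<longlonglongrightarrow> 1"
    by (rule ratio_tendsto_one_of_smallo[OF small big])
  with small big show ?thesis unfolding P_def by blast
qed

end
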